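(* Suppose $d^{(1)}_{15}<0$, $d^{(1)}_{24}<0$ and $d^{(4)}_{12}<0$. Then every section $\mathcal{A}\in H^0(\bigwedge^2\mathcal{F}\otimes\mathcal{E}\otimes\det\mathcal{E}^\vee)$ is singular above every point $p\in\mathbb{P}^1$ at which $a^{(1)}_{25}$ vanishes. (Consequently, if $C_{\mathcal{A}}$ is a smooth curve then $d^{(1)}_{25}=0$.)
   Context: Work over $\mathbb{C}$. Fix $g\ge0$, $N=g+4$, $\mathcal{E}\cong\bigoplus_{k=1}^4\mathcal{O}_{\mathbb{P}^1}(e_k)$ with $e_1\le\dots\le e_4$, $\sum e_k=N$, and $\mathcal{F}\cong\bigoplus_{i=1}^5\mathcal{O}(f_i)$ with $f_1\le\dots\le f_5$, $\sum f_i=2N$, splittings fixed; $d^{(k)}_{ij}=f_i+f_j+e_k-N$. A section $\mathcal{A}\in H^0(\bigwedge^2\mathcal{F}\otimes\mathcal{E}\otimes\det\mathcal{E}^\vee)$ is a quadruple $(A_1,\dots,A_4)$ of $5\times5$ alternating matrices whose $(i,j)$ entry $a^{(k)}_{ij}$ of $A_k$ is a homogeneous form in $\mathbb{C}[s,t]$ of degree $d^{(k)}_{ij}$ (zero if negative). $C_{\mathcal{A}}\subset\mathbb{P}(\mathcal{E})$ is the subscheme cut out by the five $4\times4$ principal sub-Pfaffians of $\mathcal{A}(\mathbf{x})=\sum_kA_kx_k$ ($x_1,\dots,x_4$ fiber coordinates). $\mathcal{A}$ is singular above $p$ if some point of $C_{\mathcal{A}}$ over $p$ has Zariski tangent space of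 dimension $\ne1$. *)

theory Defs
  imports Complex_Main "Jordan_Normal_Form.Matrix_Kernel"
begin

definition bform :: "(nat \<Rightarrow> complex) \<Rightarrow> int \<Rightarrow> complex \<Rightarrow> complex \<Rightarrow> complex" where
  "bform c d s t = (if d < 0 then 0 else (\<Sum>i\<le>nat d. c i * s ^ i * t ^ (nat d - i)))"

definition dd :: "(nat \<Rightarrow> int) \<Rightarrow> (nat \<Rightarrow> int) \<Rightarrow> int \<Rightarrow> nat \<Rightarrow> nat \<Rightarrow> nat \<Rightarrow> int" where
  "dd e f N k i j = f i + f j + e k - N"

(* A section A = (A_1,...,A_4) is given by coefficient data c k i j (indices k in 1..4,
   i,j in 1..5); entry a^(k)_ij = bform (c k i j) (d^(k)_ij).  The matrices must be
   alternating. *)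
definition alternating_data :: "(nat \<Rightarrow> nat \<Rightarrow> nat \<Rightarrow> nat \<Rightarrow> complex) \<Rightarrow> bool" where
  "alternating_data c \<longleftrightarrow>
     (\<forall>k\<in>{1..4}. \<forall>i\<in>{1..5}. \<forall>j\<in>{1..5}. \<forall>n.
        c k i i n = 0 \<and> c k j i n = - c k i j n)"

definition entry :: "(nat \<Rightarrow> int) \<Rightarrow> (nat \<Rightarrow> int) \<Rightarrow> int \<Rightarrow> (nat \<Rightarrow> nat \<Rightarrow> nat \<Rightarrow> nat \<Rightarrow> complex)
     \<Rightarrow> nat \<Rightarrow> nat \<Rightarrow> nat \<Rightarrow> complex \<Rightarrow> complex \<Rightarrow> complex" where
  "entry e f N c k i j s t = bform (c k i j) (dd e f N k i j) s t"

(* Points of the ambient space are z : nat => complex with z 0 = s, z 1 = t (base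
   coordinates) and z (k+1) = x_k, k = 1..4 (fiber coordinates). *)
definition Amat :: "(nat \<Rightarrow> int) \<Rightarrow> (nat \<Rightarrow> int) \<Rightarrow> int \<Rightarrow> (nat \<Rightarrow> nat \<Rightarrow> nat \<Rightarrow> nat \<Rightarrow> complex)
     \<Rightarrow> (nat \<Rightarrow> complex) \<Rightarrow> nat \<Rightarrow> nat \<Rightarrow> complex" where
  "Amat e f N c z i j = (\<Sum>k\<in>{1..4}. entry e f N c k i j (z 0) (z 1) * z (k + 1))"

definition pfaff4 :: "(nat \<Rightarrow> nat \<Rightarrow> complex) \<Rightarrow> nat \<Rightarrow> complex" where
  "pfaff4 M m = (let r = filter (\<lambda>i. i \<noteq> m) [1,2,3,4,5];
                     i = r ! 0; j = r ! 1; k = r ! 2; l = r ! 3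
                 in M i j * M k l - M i k * M j l + M i l * M j k)"

definition Pf :: "(nat \<Rightarrow> int) \<Rightarrow> (nat \<Rightarrow> int) \<Rightarrow> int \<Rightarrow> (nat \<Rightarrow> nat \<Rightarrow> nat \<Rightarrow> nat \<Rightarrow> complex)
     \<Rightarrow> nat \<Rightarrow> (nat \<Rightarrow> complex) \<Rightarrow> complex" where
  "Pf e f N c m z = pfaff4 (Amat e f N c z) m"

definition pderiv_at :: "((nat \<Rightarrow> complex) \<Rightarrow> complex) \<Rightarrow> nat \<Rightarrow> (nat \<Rightarrow> complex) \<Rightarrow> complex" where
  "pderiv_at F q z = (SOME D. ((\<lambda>w. F (z(q := w))) has_field_derivative D) (at (z q)))"

definition jacobian :: "(nat \<Rightarrow> int) \<Rightarrow> (nat \<Rightarrow> int) \<Rightarrow> int \<Rightarrow> (nat \<Rightarrow> nat \<Rightarrow> nat \<Rightarrow> nat \<Rightarrow> complex)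
     \<Rightarrow> (nat \<Rightarrow> complex) \<Rightarrow> complex mat" where
  "jacobian e f N c z = mat 5 6 (\<lambda>(r, q). pderiv_at (Pf e f N c (r + 1)) q z)"

definition on_curve_over :: "(nat \<Rightarrow> int) \<Rightarrow> (nat \<Rightarrow> int) \<Rightarrow> int \<Rightarrow> (nat \<Rightarrow> nat \<Rightarrow> nat \<Rightarrow> nat \<Rightarrow> complex)
     \<Rightarrow> complex \<Rightarrow> complex \<Rightarrow> (nat \<Rightarrow> complex) \<Rightarrow> bool" where
  "on_curve_over e f N c s0 t0 z \<longleftrightarrow>
     z 0 = s0 \<and> z 1 = t0 \<and> (\<exists>k\<in>{1..4}. z (k + 1) \<noteq> 0) \<and>
     (\<forall>m\<in>{1..5}. Pf e f N c m z = 0)"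

(* P(E) is the quotient of {(s,t) <> 0, x <> 0} in C^6 by the free action of a
   2-dimensional torus; the Zariski tangent space of C_A at the image of z is the
   kernel of the Jacobian modulo the 2-dimensional span of the torus orbit directions. *)
definition tangent_dim :: "(nat \<Rightarrow> int) \<Rightarrow> (nat \<Rightarrow> int) \<Rightarrow> int \<Rightarrow> (nat \<Rightarrow> nat \<Rightarrow> nat \<Rightarrow> nat \<Rightarrow> complex)
     \<Rightarrow> (nat \<Rightarrow> complex) \<Rightarrow> int" where
  "tangent_dim e f N c z = int (kernel_dim (jacobian e f N c z)) - 2"

definition singular_above :: "(nat \<Rightarrow> int) \<Rightarrow> (nat \<Rightarrow> int) \<Rightarrow> int \<Rightarrow> (nat \<Rightarrow> nat \<Rightarrow> nat \<Rightarrow> nat \<Rightarrow> complex)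
     \<Rightarrow> complex \<Rightarrow> complex \<Rightarrow> bool" where
  "singular_above e f N c s0 t0 \<longleftrightarrow>
     (\<exists>z. on_curve_over e f N c s0 t0 z \<and> tangent_dim e f N c z \<noteq> 1)"

end

theory Submission
  imports Defs "HOL-Analysis.Derivative"
begin

(* Take the point x = (1,0,0,0) over p. Since d^(k)_12 <= d^(4)_12 < 0, the entry a_12 of A(x)
   vanishes identically, and the degree hypotheses together with a^(1)_25(p) = 0 make the
   entries a_1j and a_2j (j = 3,4,5) of A_1(p) vanish. Every term of the Pfaffians
   Pf_3, Pf_4, Pf_5 then either contains a_12 or is a product a_1j a_2k of two functions
   vanishing at the point, so these three Pfaffians have zero gradient there. The Jacobian
   of the five Pfaffians has rank at most 2, so the tangent space has dimension at least
   6 - 2 - 2 = 2. Only the orderings of the e_k and f_i enter. *)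

lemma has_field_derivative_mult_zero:
  assumes "f field_differentiable at x" "g field_differentiable at x" "f x = 0" "g x = 0"
  shows "((\<lambda>w. f w * g w) has_field_derivative 0) (at x)"
proof -
  obtain D E where "(f has_field_derivative D) (at x)" "(g has_field_derivative E) (at x)"
    using assms(1,2) unfolding field_differentiable_def by blast
  from DERIV_mult[OF this] show ?thesis using assms(3,4) by simp
qed

lemma pderiv_at_eqI:
  "((\<lambda>w. F (z(q := w))) has_field_derivative D) (at (z q)) \<Longrightarrow> pderiv_at F q z = D"
  unfolding pderiv_at_def by (rule some_equality) (auto intro: DERIV_unique)

lemma field_differentiable_fun_upd_apply:
  "(\<lambda>w. (z(q := w)) n) field_differentiable F"
  by (cases "n = q") simp_all

lemma field_differentiable_bform:
  assumes "f field_differentiable (at x within S)" "g field_differentiable (at x within S)"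
  shows "(\<lambda>w. bform a d (f w) (g w)) field_differentiable (at x within S)"
  unfolding bform_def by (cases "d < 0") (simp_all add: assms derivative_intros)

lemma field_differentiable_Amat_fun_upd:
  "(\<lambda>w. Amat e f N c (z(q := w)) i j) field_differentiable (at x)"
  unfolding Amat_def entry_def
  by (intro derivative_intros field_differentiable_bform field_differentiable_fun_upd_apply)

lemma kernel_dim_ge_dim_col_minus_dim_row:
  fixes A :: "'a :: field mat"
  assumes A: "A \<in> carrier_mat nr nc"
  shows "nc - nr \<le> kernel_dim A"
proof -
  define C where "C = gauss_jordan_single A"
  note C = gauss_jordan_single[OF A C_def[symmetric]]
  from C(3) obtain p where "pivot_fun C p nc"
    unfolding row_echelon_form_def using C(2) by auto
  then have "length (pivot_positions C) = card {i. i < nr \<and> Matrix.row C i \<noteq> 0\<^sub>v nc}"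
    by (rule pivot_positions(4)[OF C(2)])
  also have "\<dots> \<le> card {..<nr}" by (rule card_mono) auto
  finally show ?thesis unfolding kernel_dim_code C_def[symmetric] using A by simp
qed

lemma kernel_dim_ge_of_zero_rows:
  fixes A :: "'a :: field mat"
  assumes A: "A \<in> carrier_mat nr nc" and "k \<le> nr"
    and zero: "\<And>i j. k \<le> i \<Longrightarrow> i < nr \<Longrightarrow> j < nc \<Longrightarrow> A $$ (i, j) = 0"
  shows "nc - k \<le> kernel_dim A"
proof -
  define B where "B = Matrix.mat k nc (\<lambda>ij. A $$ ij)"
  have B: "B \<in> carrier_mat k nc" unfolding B_def by simp
  have "A *\<^sub>v v = 0\<^sub>v nr \<longleftrightarrow> B *\<^sub>v v = 0\<^sub>v k" if "v \<in> carrier_vec nc" for v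
  proof -
    have "(A *\<^sub>v v) $ i = (if i < k then (B *\<^sub>v v) $ i else 0)" if "i < nr" for i
      using A \<open>k \<le> nr\<close> zero \<open>i < nr\<close> \<open>v \<in> carrier_vec nc\<close>
      by (auto simp: B_def scalar_prod_def Matrix.row_def intro!: sum.neutral)
    then show ?thesis using A B \<open>k \<le> nr\<close> by (auto simp: Matrix.vec_eq_iff)
  qed
  then have "mat_kernel A = mat_kernel B"
    using A B unfolding mat_kernel_def by auto
  then have "kernel_dim A = kernel_dim B"
    using A B unfolding kernel_dim_def by simp
  with kernel_dim_ge_dim_col_minus_dim_row[OF B] show ?thesis by simp
qed

lemma pfaff4_simps:
  "pfaff4 M 1 = M 2 3 * M 4 5 - M 2 4 * M 3 5 + M 2 5 * M 3 4"
  "pfaff4 M 2 = M 1 3 * M 4 5 - M 1 4 * M 3 5 + M 1 5 * M 3 4"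
  "pfaff4 M 3 = M 1 2 * M 4 5 - M 1 4 * M 2 5 + M 1 5 * M 2 4"
  "pfaff4 M 4 = M 1 2 * M 3 5 - M 1 3 * M 2 5 + M 1 5 * M 2 3"
  "pfaff4 M 5 = M 1 2 * M 3 4 - M 1 3 * M 2 4 + M 1 4 * M 2 3"
  unfolding pfaff4_def by (simp_all add: Let_def)

lemma pfaff4_eq_zero_if_rows12_zero:
  assumes "\<And>j. j \<in> {2..5} \<Longrightarrow> M 1 j = 0" "\<And>j. j \<in> {3..5} \<Longrightarrow> M 2 j = 0"
    and "m \<in> {1..5}"
  shows "pfaff4 M m = 0"
proof -
  have zero: "M 1 2 = 0" "M 1 3 = 0" "M 1 4 = 0" "M 1 5 = 0" "M 2 3 = 0" "M 2 4 = 0" "M 2 5 = 0"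
    using assms(1,2) by auto
  have "m = 1 \<or> m = 2 \<or> m = 3 \<or> m = 4 \<or> m = 5" using assms(3) by auto
  then show ?thesis by (elim disjE; simp only: pfaff4_simps zero) simp_all
qed

lemma has_field_derivative_pfaff4_zero:
  fixes M :: "complex \<Rightarrow> nat \<Rightarrow> nat \<Rightarrow> complex"
  assumes diff: "\<And>i j. (\<lambda>w. M w i j) field_differentiable at x"
    and a12: "\<And>w. M w 1 2 = 0"
    and zero1: "\<And>j. j \<in> {3..5} \<Longrightarrow> M x 1 j = 0"
    and zero2: "\<And>j. j \<in> {3..5} \<Longrightarrow> M x 2 j = 0"
    and "m \<in> {3..5}"
  shows "((\<lambda>w. pfaff4 (M w) m) has_field_derivative 0) (at x)"
proof -
  obtain k l where kl: "k \<in> {3..5}" "l \<in> {3..5}"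
    and pf: "\<And>w. pfaff4 (M w) m = M w 1 l * M w 2 k - M w 1 k * M w 2 l"
  proof -
    consider "m = 3" | "m = 4" | "m = 5" using \<open>m \<in> {3..5}\<close> by fastforce
    then show thesis
    proof cases
      case 1
      show thesis by (rule that[of 4 5]) (simp_all only: 1 pfaff4_simps a12, simp_all)
    next
      case 2
      show thesis by (rule that[of 3 5]) (simp_all only: 2 pfaff4_simps a12, simp_all)
    next
      case 3
      show thesis by (rule that[of 3 4]) (simp_all only: 3 pfaff4_simps a12, simp_all)
    qed
  qed
  have "((\<lambda>w. M w 1 l * M w 2 k - M w 1 k * M w 2 l) has_field_derivative 0 - 0) (at x)"
    using kl by (intro DERIV_diff has_field_derivative_mult_zero diff zero1 zero2)
  then show ?thesis unfolding pf by simp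
qed

lemma entry_eq_zero_if_dd_neg: "dd e f N k i j < 0 \<Longrightarrow> entry e f N c k i j s t = 0"
  unfolding entry_def bform_def by simp

lemma Amat_eq_zero_if_dd_neg:
  "(\<And>k. k \<in> {1..4} \<Longrightarrow> dd e f N k i j < 0) \<Longrightarrow> Amat e f N c z i j = 0"
  unfolding Amat_def by (simp add: entry_eq_zero_if_dd_neg)

lemma Amat_at_first_basis_vector:
  assumes "z 2 = 1" "z 3 = 0" "z 4 = 0" "z 5 = 0"
  shows "Amat e f N c z i j = entry e f N c 1 i j (z 0) (z 1)"
proof -
  have "{1..4} = {1, 2, 3, 4::nat}" by auto
  then show ?thesis unfolding Amat_def using assms by (simp add: eval_nat_numeral)
qed

lemma singular_above_if_first_two_rows_vanish:
  assumes a12: "\<And>z. Amat e f N c z 1 2 = 0"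
    and a1: "\<And>j. j \<in> {3..5} \<Longrightarrow> entry e f N c 1 1 j s0 t0 = 0"
    and a2: "\<And>j. j \<in> {3..5} \<Longrightarrow> entry e f N c 1 2 j s0 t0 = 0"
  shows "singular_above e f N c s0 t0"
proof -
  define z :: "nat \<Rightarrow> complex" where
    "z = (\<lambda>n. if n = 0 then s0 else if n = 1 then t0 else if n = 2 then 1 else 0)"
  have Az: "Amat e f N c z i j = entry e f N c 1 i j s0 t0" for i j
    by (subst Amat_at_first_basis_vector) (auto simp: z_def)
  have row1: "Amat e f N c z 1 j = 0" if "j \<in> {3..5}" for j
    using a1[OF that] by (simp only: Az)
  have row2: "Amat e f N c z 2 j = 0" if "j \<in> {3..5}" for j
    using a2[OF that] by (simp only: Az)
  have on_curve: "on_curve_over e f N c s0 t0 z"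
    unfolding on_curve_over_def Pf_def
  proof (intro conjI ballI)
    show "\<exists>k\<in>{1..4}. z (k + 1) \<noteq> 0" by (rule bexI[of _ 1]) (auto simp: z_def)
    show "pfaff4 (Amat e f N c z) m = 0" if "m \<in> {1..5}" for m
    proof (rule pfaff4_eq_zero_if_rows12_zero[where M = "Amat e f N c z", OF _ row2 that])
      fix j :: nat
      assume "j \<in> {2..5}"
      then consider "j = 2" | "j \<in> {3..5}" by fastforce
      then show "Amat e f N c z 1 j = 0" by cases (simp_all only: a12 row1)
    qed
  qed (simp_all add: z_def)
  define J where "J = jacobian e f N c z"
  have J: "J \<in> carrier_mat 5 6" unfolding J_def jacobian_def by simp
  have "J $$ (r, q) = 0" if "2 \<le> r" "r < 5" "q < 6" for r q
  proof -
    have "r + 1 \<in> {3..5}" using that by simp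
    then have "((\<lambda>w. Pf e f N c (r + 1) (z(q := w))) has_field_derivative 0) (at (z q))"
      unfolding Pf_def
      by (intro has_field_derivative_pfaff4_zero field_differentiable_Amat_fun_upd a12)
        (simp_all only: fun_upd_triv row1 row2)
    then show ?thesis unfolding J_def jacobian_def using that by (simp add: pderiv_at_eqI)
  qed
  then have "6 - 2 \<le> kernel_dim J" by (intro kernel_dim_ge_of_zero_rows[OF J]) auto
  then have "tangent_dim e f N c z \<noteq> 1" unfolding tangent_dim_def J_def by simp
  with on_curve show ?thesis unfolding singular_above_def by blast
qed

theorem proposition3p3:
  fixes g :: nat and N :: int and e f :: "nat \<Rightarrow> int"
    and c :: "nat \<Rightarrow> nat \<Rightarrow> nat \<Rightarrow> nat \<Rightarrow> complex"
    and s0 t0 :: complex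
  assumes hN: "N = int g + 4"
    and he_sorted: "\<forall>k. 1 \<le> k \<and> k < 4 \<longrightarrow> e k \<le> e (k + 1)"
    and he_sum: "(\<Sum>k\<in>{1..4}. e k) = N"
    and hf_sorted: "\<forall>i. 1 \<le> i \<and> i < 5 \<longrightarrow> f i \<le> f (i + 1)"
    and hf_sum: "(\<Sum>i\<in>{1..5}. f i) = 2 * N"
    and h15: "dd e f N 1 1 5 < 0"
    and h24: "dd e f N 1 2 4 < 0"
    and h12: "dd e f N 4 1 2 < 0"
    and hA: "alternating_data c"
    and hp: "(s0, t0) \<noteq> (0, 0)"
    and hvan: "entry e f N c 1 2 5 s0 t0 = 0"
  shows "singular_above e f N c s0 t0"
proof (rule singular_above_if_first_two_rows_vanish)
  have e: "e 1 \<le> e 2" "e 2 \<le> e 3" "e 3 \<le> e 4"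
    using he_sorted[rule_format, of 1] he_sorted[rule_format, of 2] he_sorted[rule_format, of 3]
    by (simp_all add: eval_nat_numeral)
  have f: "f 3 \<le> f 4" "f 4 \<le> f 5"
    using hf_sorted[rule_format, of 3] hf_sorted[rule_format, of 4] by (simp_all add: eval_nat_numeral)
  have j345: "j = 3 \<or> j = 4 \<or> j = 5" if "j \<in> {3..5::nat}" for j
    using that by auto
  show "Amat e f N c z 1 2 = 0" for z
    using h12 e by (intro Amat_eq_zero_if_dd_neg) (auto simp: dd_def numeral_eq_Suc le_Suc_eq)
  show "entry e f N c 1 1 j s0 t0 = 0" if "j \<in> {3..5}" for j
    using j345[OF that] h15 f by (intro entry_eq_zero_if_dd_neg) (auto simp: dd_def)
  show "entry e f N c 1 2 j s0 t0 = 0" if "j \<in> {3..5}" for j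
    using j345[OF that] hvan h24 f by (auto intro: entry_eq_zero_if_dd_neg simp: dd_def)
qed

end
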